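(* Let $\mathcal{B}$ be a prime Banach algebra over $\mathbb{R}$ or $\mathbb{C}$, and let $\mathcal{H}_1,\mathcal{H}_2$ be non-empty open subsets of $\mathcal{B}$. Suppose $\mathcal{B}$ admits a continuous generalized derivation $F$ associated with a derivation $d$ that is not injective, such that for every $(x,y)\in\mathcal{H}_1\times\mathcal{H}_2$ there exist positive integers $p=p(x,y)$, $q=q(x,y)$ with $$F(x^{p}y^{q})+x^{p}\circ y^{q}\in Z(\mathcal{B}).$$ Then $\mathcal{B}$ is commutative or $d(Z(\mathcal{B}))=\{0\}$.
   Context: $Z(\mathcal{B})$ denotes the center of $\mathcal{B}$. For $x,y\in\mathcal{B}$, $x\circ y=xy+yx$ and $[x,y]=xy-yx$. $\mathcal{B}$ is prime if $x\mathcal{B}y=\{0\}$ implies $x=0$ or $y=0$. A derivation is an additive map $d:\mathcal{B}\to\mathcal{B}$ with $d(xy)=d(x)y+xd(y)$ for all $x,y$. A generalized derivation associated with the derivation $d$ is an additive map $F:\mathcal{B}\to\mathcal{B}$ with $F(xy)=F(x)y+xd(y)$ for all $x,y\in\mathcal{B}$. *)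

theory Defs
  imports "HOL-Analysis.Analysis"
begin

definition center :: "'a::ring set" where
  "center = {z. \<forall>x. z * x = x * z}"

definition jordan_prod :: "'a::ring \<Rightarrow> 'a \<Rightarrow> 'a" (infixl "\<circ>\<^sub>J" 70) where
  "x \<circ>\<^sub>J y = x * y + y * x"

definition prime_ring :: "'a::ring itself \<Rightarrow> bool" where
  "prime_ring _ \<longleftrightarrow> (\<forall>x y::'a. (\<forall>r. x * r * y = 0) \<longrightarrow> x = 0 \<or> y = 0)"

definition is_derivation :: "('a::ring \<Rightarrow> 'a) \<Rightarrow> bool" where
  "is_derivation d \<longleftrightarrow> (\<forall>x y. d (x + y) = d x + d y) \<and>
                          (\<forall>x y. d (x * y) = d x * y + x * d y)"

definition is_gen_derivation :: "('a::ring \<Rightarrow> 'a) \<Rightarrow> ('a \<Rightarrow> 'a) \<Rightarrow> bool" where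
  "is_gen_derivation F d \<longleftrightarrow> is_derivation d \<and> (\<forall>x y. F (x + y) = F x + F y) \<and>
                          (\<forall>x y. F (x * y) = F x * y + x * d y)"

text \<open>Positive powers in a possibly non-unital ring: ppow x n = x^(n+1).\<close>
primrec ppow :: "'a::ring \<Rightarrow> nat \<Rightarrow> 'a" where
  "ppow x 0 = x"
| "ppow x (Suc n) = x * ppow x n"

end

theory Submission
  imports Defs
begin

text \<open>
  For fixed exponents the expression \<open>F(x\<^sup>p y\<^sup>q) + x\<^sup>p \<circ> y\<^sup>q\<close> is a
  continuous function of \<open>(x, y)\<close>, so by Baire's theorem a single pair \<open>(p, q)\<close> makes it
  central on a product of two nonempty open sets. Along a line \<open>a + t b\<close> it is a polynomial
  in \<open>t\<close> with leading coefficient its value at \<open>b\<close>, and a polynomial that is central for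
  all small \<open>t\<close> has central coefficients; hence the identity holds on the whole algebra.
  If \<open>d z \<noteq> 0\<close> for some central \<open>z\<close>, comparing the identity at \<open>y = z\<close> and
  \<open>y = z\<^sup>2\<close> shows that \<open>x\<^sup>p c\<close> is central for the nonzero central element
  \<open>c = z\<^sup>q d(z\<^sup>q)\<close>. Primeness cancels \<open>c\<close>, and the linear coefficient of
  \<open>(c + t y)\<^sup>p\<close>, a nonzero multiple of \<open>c\<^sup>p\<^sup>-\<^sup>1 y\<close>, shows that every \<open>y\<close>
  is central.
\<close>

lemma centerI: "(\<And>x. z * x = x * z) \<Longrightarrow> z \<in> center"
  by (simp add: center_def)

lemma centerD: "z \<in> center \<Longrightarrow> z * x = x * z"
  by (simp add: center_def)

lemma center_zero: "0 \<in> center"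
  by (simp add: center_def)

lemma center_diff: "a \<in> center \<Longrightarrow> b \<in> center \<Longrightarrow> a - b \<in> center"
  by (simp add: center_def algebra_simps)

lemma center_mult: "a \<in> center \<Longrightarrow> b \<in> center \<Longrightarrow> a * b \<in> center"
  by (rule centerI) (metis centerD mult.assoc)

lemma center_scaleR: "(a::'a::real_algebra) \<in> center \<Longrightarrow> r *\<^sub>R a \<in> center"
  by (simp add: center_def)

lemma closed_center: "closed (center :: 'a::real_normed_algebra set)"
  unfolding center_def by (intro closed_Collect_all closed_Collect_eq continuous_intros)

lemma ppow_in_center: "c \<in> center \<Longrightarrow> ppow c n \<in> center"
  by (induction n) (simp_all add: center_mult)

lemma ppow_mult_eq_funpow: "ppow c n * y = ((*) c ^^ Suc n) y"
  by (induction n) (simp_all add: mult.assoc)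

lemma ppow_mult_self_central:
  assumes "z \<in> center"
  shows "ppow (z * z) n = ppow z n * ppow z n"
proof (induction n)
  case (Suc n)
  have "ppow (z * z) (Suc n) = z * (z * ppow z n) * ppow z n"
    using Suc by (simp add: mult.assoc)
  also have "\<dots> = z * (ppow z n * z) * ppow z n"
    using centerD[OF assms, of "ppow z n"] by simp
  also have "\<dots> = ppow z (Suc n) * ppow z (Suc n)"
    by (simp add: mult.assoc)
  finally show ?case .
qed simp

lemma continuous_on_ppow [continuous_intros]:
  fixes f :: "'b::topological_space \<Rightarrow> 'a::real_normed_algebra"
  shows "continuous_on S f \<Longrightarrow> continuous_on S (\<lambda>x. ppow (f x) n)"
  by (induction n) (auto intro!: continuous_intros)

lemma derivation_zero: "is_derivation d \<Longrightarrow> d 0 = 0"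
  unfolding is_derivation_def by (metis add_cancel_right_right add_0)

lemma derivation_center:
  assumes "is_derivation d" "z \<in> center"
  shows "d z \<in> center"
proof (rule centerI)
  fix x
  have "d z * x + z * d x = d x * z + x * d z"
    using assms by (metis centerD is_derivation_def)
  then show "d z * x = x * d z"
    using centerD[OF assms(2)] by simp
qed

lemma derivation_ppow_central:
  fixes d :: "'a::real_algebra \<Rightarrow> 'a"
  assumes der: "is_derivation d" and z: "z \<in> center"
  shows "d (ppow z n) = real (Suc n) *\<^sub>R ((*) z ^^ n) (d z)"
proof (induction n)
  case (Suc n)
  have "d (ppow z (Suc n)) = d z * ppow z n + z * d (ppow z n)"
    using der by (simp add: is_derivation_def)
  also have "d z * ppow z n = ((*) z ^^ Suc n) (d z)"
    using centerD[OF ppow_in_center[OF z]] ppow_mult_eq_funpow by metis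
  also have "z * d (ppow z n) = real (Suc n) *\<^sub>R ((*) z ^^ Suc n) (d z)"
    using Suc by simp
  finally show ?case
    by (simp add: scaleR_add_left scaleR_2 algebra_simps)
qed simp

lemma prime_ring_central_mult_eq_0:
  assumes "prime_ring TYPE('a::ring)" "(c::'a) \<in> center" "c \<noteq> 0" "c * a = 0"
  shows "a = 0"
proof -
  have "c * r * a = 0" for r
    using assms(2,4) by (metis centerD mult.assoc mult_zero_right)
  then show ?thesis
    using assms(1,3) unfolding prime_ring_def by blast
qed

lemma prime_ring_central_ppow_nonzero:
  "prime_ring TYPE('a::ring) \<Longrightarrow> (z::'a) \<in> center \<Longrightarrow> z \<noteq> 0 \<Longrightarrow> ppow z n \<noteq> 0"
  by (induction n) (auto dest: prime_ring_central_mult_eq_0)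

lemma prime_ring_funpow_central_mult_eq_0:
  "prime_ring TYPE('a::ring) \<Longrightarrow> (c::'a) \<in> center \<Longrightarrow> c \<noteq> 0 \<Longrightarrow> ((*) c ^^ n) y = 0 \<Longrightarrow> y = 0"
  by (induction n) (auto dest: prime_ring_central_mult_eq_0)

lemma prime_ring_center_cancel:
  assumes P: "prime_ring TYPE('a::ring)" and c: "(c::'a) \<in> center" "c \<noteq> 0"
    and cy: "c * y \<in> center"
  shows "y \<in> center"
proof (rule centerI)
  fix w
  have "c * (y * w - w * y) = 0"
    using centerD[OF cy, of w] centerD[OF c(1), of w]
    by (simp add: right_diff_distrib mult.assoc [symmetric])
  then have "y * w - w * y = 0"
    by (rule prime_ring_central_mult_eq_0[OF P c])
  then show "y * w = w * y"
    by simp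
qed

lemma prime_ring_funpow_center_cancel:
  "prime_ring TYPE('a::ring) \<Longrightarrow> (c::'a) \<in> center \<Longrightarrow> c \<noteq> 0 \<Longrightarrow> ((*) c ^^ n) y \<in> center \<Longrightarrow> y \<in> center"
  by (induction n) (auto dest: prime_ring_center_cancel)

lemma additive_continuous_imp_linear:
  fixes f :: "'a::real_normed_vector \<Rightarrow> 'b::real_normed_vector"
  assumes add: "\<And>x y. f (x + y) = f x + f y" and cont: "continuous_on UNIV f"
  shows "linear f"
proof -
  interpret additive f
    by (rule additive.intro) (rule add)
  have int: "f (of_int i *\<^sub>R x) = of_int i *\<^sub>R f x" for i x
    by (induction i rule: int_induct[where k = 0])
      (simp_all add: zero add diff scaleR_add_left scaleR_diff_left)
  have rat: "f (r *\<^sub>R x) = r *\<^sub>R f x" if r: "r \<in> \<rat>" for r x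
  proof -
    obtain a b where b: "b > 0" and r: "r = of_int a / of_int b"
      using Rats_cases'[OF r] by metis
    have "of_int b *\<^sub>R f (r *\<^sub>R x) = f (of_int b *\<^sub>R (r *\<^sub>R x))"
      by (rule int [symmetric])
    also have "of_int b *\<^sub>R (r *\<^sub>R x) = of_int a *\<^sub>R x"
      using b r by simp
    also have "f (of_int a *\<^sub>R x) = of_int a *\<^sub>R f x"
      by (rule int)
    finally have "of_int b *\<^sub>R f (r *\<^sub>R x) = of_int a *\<^sub>R f x" .
    then have "inverse (of_int b) *\<^sub>R (of_int b *\<^sub>R f (r *\<^sub>R x)) = (of_int a / of_int b) *\<^sub>R f x"
      by (simp add: divide_inverse mult.commute)
    then show ?thesis
      using b r by simp
  qed
  have "f (r *\<^sub>R x) = r *\<^sub>R f x" for r x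
  proof -
    have "closed {r. f (r *\<^sub>R x) = r *\<^sub>R f x}"
      by (intro closed_Collect_eq continuous_on_compose2[OF cont] continuous_intros) auto
    with rat have "closure \<rat> \<subseteq> {r. f (r *\<^sub>R x) = r *\<^sub>R f x}"
      by (intro closure_minimal) auto
    then show ?thesis
      by (auto simp: Rats_closure_real)
  qed
  then show ?thesis
    by (intro linearI) (simp_all add: add)
qed

lemma Baire_closed_cover_interior:
  fixes G :: "'i::countable \<Rightarrow> 'a::complete_space set"
  assumes closed: "\<And>i. closed (G i)" and "open U" "U \<noteq> {}" and cover: "U \<subseteq> (\<Union>i. G i)"
  obtains i where "interior (G i) \<noteq> {}"
proof -
  have "interior (\<Union>i. G i) \<noteq> {}"
    using interior_maximal[OF cover \<open>open U\<close>] \<open>U \<noteq> {}\<close> by blast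
  moreover have "interior (\<Union>i. G i) = {}" if "\<And>i. interior (G i) = {}"
  proof -
    have "euclidean interior_of \<Union>(range G) = {}"
      by (rule Baire_category_alt)
        (use that closed closed_closedin completely_metrizable_space_euclidean in auto)
    then show ?thesis
      by simp
  qed
  ultimately show ?thesis
    using that by blast
qed

primrec line_coeff :: "'a::ring \<Rightarrow> 'a \<Rightarrow> nat \<Rightarrow> nat \<Rightarrow> 'a" where
  "line_coeff a b 0 k = (if k = 0 then a else if k = 1 then b else 0)"
| "line_coeff a b (Suc n) k =
     a * line_coeff a b n k + (if k = 0 then 0 else b * line_coeff a b n (k - 1))"

lemma line_coeff_beyond: "Suc n < k \<Longrightarrow> line_coeff a b n k = 0"
  by (induction n arbitrary: k) auto

lemma line_coeff_0: "line_coeff a b n 0 = ppow a n"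
  by (induction n) auto

lemma line_coeff_top: "line_coeff a b n (Suc n) = ppow b n"
  by (induction n) (auto simp: line_coeff_beyond)

lemma line_coeff_1_central:
  fixes a b :: "'a::real_algebra"
  assumes a: "a \<in> center"
  shows "line_coeff a b n 1 = real (Suc n) *\<^sub>R ((*) a ^^ n) b"
proof (induction n)
  case (Suc n)
  have "b * ppow a n = ((*) a ^^ Suc n) b"
    using centerD[OF ppow_in_center[OF a]] ppow_mult_eq_funpow by metis
  with Suc show ?case
    by (simp add: line_coeff_0 scaleR_add_left scaleR_2 algebra_simps)
qed simp

lemma ppow_line_expansion:
  fixes a b :: "'a::real_algebra"
  shows "ppow (a + t *\<^sub>R b) n = (\<Sum>k\<le>Suc n. t ^ k *\<^sub>R line_coeff a b n k)"
proof (induction n)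
  case (Suc n)
  let ?C = "line_coeff a b n"
  have "ppow (a + t *\<^sub>R b) (Suc n) = (a + t *\<^sub>R b) * (\<Sum>k\<le>Suc n. t ^ k *\<^sub>R ?C k)"
    using Suc by simp
  also have "\<dots> = (\<Sum>k\<le>Suc n. t ^ k *\<^sub>R (a * ?C k)) + (\<Sum>k\<le>Suc n. t ^ Suc k *\<^sub>R (b * ?C k))"
    by (simp only: distrib_right sum_distrib_left mult_scaleR_left mult_scaleR_right
        scaleR_sum_right scaleR_scaleR power_Suc)
      (simp add: sum.distrib scaleR_right_distrib mult.commute del: sum.atMost_Suc)
  also have "(\<Sum>k\<le>Suc n. t ^ k *\<^sub>R (a * ?C k)) = (\<Sum>k\<le>Suc (Suc n). t ^ k *\<^sub>R (a * ?C k))"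
    by (simp add: line_coeff_beyond)
  also have "(\<Sum>k\<le>Suc n. t ^ Suc k *\<^sub>R (b * ?C k))
      = (\<Sum>k\<le>Suc (Suc n). t ^ k *\<^sub>R (if k = 0 then 0 else b * ?C (k - 1)))"
    by (subst sum.atMost_Suc_shift) simp
  finally show ?case
    by (simp add: scaleR_right_distrib sum.distrib)
qed simp

lemma polyfun_vanishing_near_0_coeffs_zero:
  fixes C :: "nat \<Rightarrow> 'a::real_normed_vector"
  assumes e: "e > 0" and vanish: "\<And>t. \<bar>t\<bar> < e \<Longrightarrow> (\<Sum>k\<le>n. t ^ k *\<^sub>R C k) = 0"
    and "k \<le> n"
  shows "C k = 0"
  using vanish \<open>k \<le> n\<close>
proof (induction n arbitrary: C k)
  case 0
  then show ?case
    using "0.prems"(1)[of 0] e by simp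
next
  case (Suc n)
  have C0: "C 0 = 0"
    using Suc.prems(1)[of 0] e by (simp add: sum.atMost_Suc_shift del: sum.atMost_Suc)
  define g where "g t = (\<Sum>k\<le>n. t ^ k *\<^sub>R C (Suc k))" for t
  have factor: "(\<Sum>k\<le>Suc n. t ^ k *\<^sub>R C k) = t *\<^sub>R g t" for t
    by (simp only: sum.atMost_Suc_shift g_def C0 scaleR_sum_right scaleR_scaleR power_Suc) simp
  have g_punctured: "g t = 0" if "t \<noteq> 0" "\<bar>t\<bar> < e" for t
    using Suc.prems(1)[OF that(2)] that(1) factor[of t] by simp
  have "(g \<longlongrightarrow> g 0) (at 0)"
    unfolding g_def by (intro tendsto_intros)
  moreover have "(g \<longlongrightarrow> 0) (at 0)"
  proof (rule tendsto_eventually)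
    show "eventually (\<lambda>t. g t = 0) (at (0::real))"
      unfolding eventually_at using e g_punctured by (intro exI[of _ e]) auto
  qed
  ultimately have "g 0 = 0"
    using tendsto_unique[OF trivial_limit_at] by metis
  then have g: "g t = 0" if "\<bar>t\<bar> < e" for t
    using g_punctured that by (cases "t = 0") auto
  show ?case
  proof (cases k)
    case 0
    with C0 show ?thesis by simp
  next
    case (Suc k')
    then show ?thesis
      using Suc.IH[of "\<lambda>k. C (Suc k)" k'] Suc.prems(2) g unfolding g_def by simp
  qed
qed

lemma polyfun_central_near_0_coeffs_central:
  fixes C :: "nat \<Rightarrow> 'a::real_normed_algebra"
  assumes e: "e > 0" and central: "\<And>t. \<bar>t\<bar> < e \<Longrightarrow> (\<Sum>k\<le>n. t ^ k *\<^sub>R C k) \<in> center"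
    and "k \<le> n"
  shows "C k \<in> center"
proof (rule centerI)
  fix w
  have "(\<Sum>k\<le>n. t ^ k *\<^sub>R (C k * w - w * C k)) = 0" if "\<bar>t\<bar> < e" for t
  proof -
    have "(\<Sum>k\<le>n. t ^ k *\<^sub>R (C k * w - w * C k))
        = (\<Sum>k\<le>n. t ^ k *\<^sub>R C k) * w - w * (\<Sum>k\<le>n. t ^ k *\<^sub>R C k)"
      by (simp add: sum_distrib_left sum_distrib_right scaleR_diff_right sum_subtractf
          del: sum.atMost_Suc)
    then show ?thesis
      using centerD[OF central[OF that]] by simp
  qed
  then have "C k * w - w * C k = 0"
    by (rule polyfun_vanishing_near_0_coeffs_zero[OF e _ \<open>k \<le> n\<close>])
  then show "C k * w = w * C k"
    by simp
qed

lemma linear_ppow_central_on_open: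
  fixes L :: "'a::real_normed_algebra \<Rightarrow> 'a"
  assumes L: "linear L" and "open U" "a \<in> U"
    and central: "\<And>x. x \<in> U \<Longrightarrow> L (ppow x n) \<in> center"
  shows "L (ppow b n) \<in> center"
proof -
  interpret L: linear L by (rule L)
  have "open ((\<lambda>t. a + t *\<^sub>R b) -` U)"
    by (intro continuous_open_vimage \<open>open U\<close> continuous_intros)
  moreover have "0 \<in> (\<lambda>t. a + t *\<^sub>R b) -` U"
    using \<open>a \<in> U\<close> by simp
  ultimately obtain e where e: "e > 0" and "ball 0 e \<subseteq> (\<lambda>t. a + t *\<^sub>R b) -` U"
    by (rule openE)
  then have line: "a + t *\<^sub>R b \<in> U" if "\<bar>t\<bar> < e" for t
    using that by (auto simp: dist_real_def)
  have "(\<Sum>k\<le>Suc n. t ^ k *\<^sub>R L (line_coeff a b n k)) \<in> center" if "\<bar>t\<bar> < e" for t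
  proof -
    have "(\<Sum>k\<le>Suc n. t ^ k *\<^sub>R L (line_coeff a b n k)) = L (ppow (a + t *\<^sub>R b) n)"
      by (simp only: ppow_line_expansion L.sum L.scale)
    then show ?thesis
      using central line that by simp
  qed
  from polyfun_central_near_0_coeffs_central[OF e this order_refl] show ?thesis
    by (simp add: line_coeff_top)
qed

lemma bilinear_ppow_central_on_open:
  fixes B :: "'a::real_normed_algebra \<Rightarrow> 'a \<Rightarrow> 'a"
  assumes B: "bilinear B" and U: "open U" "U \<noteq> {}" and V: "open V" "V \<noteq> {}"
    and central: "\<And>x y. x \<in> U \<Longrightarrow> y \<in> V \<Longrightarrow> B (ppow x m) (ppow y n) \<in> center"
  shows "B (ppow x m) (ppow y n) \<in> center"
proof -
  obtain u v where "u \<in> U" "v \<in> V"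
    using U V by blast
  have "B (ppow x m) (ppow y' n) \<in> center" if "y' \<in> V" for y'
    using linear_ppow_central_on_open[of "\<lambda>X. B X (ppow y' n)", OF _ U(1) \<open>u \<in> U\<close>] B central that
    by (auto simp: bilinear_def)
  then show ?thesis
    using linear_ppow_central_on_open[of "B (ppow x m)", OF _ V(1) \<open>v \<in> V\<close>] B
    by (auto simp: bilinear_def)
qed

lemma gen_derivation_identity_central_product:
  assumes gen: "is_gen_derivation F d"
    and identity: "\<And>x y. F (ppow x m * ppow y l) + ppow x m \<circ>\<^sub>J ppow y l \<in> center"
    and z: "z \<in> center"
  shows "ppow x m * (ppow z l * d (ppow z l)) \<in> center"
proof -
  define X v where "X = ppow x m" and "v = ppow z l"
  have Fmul: "F (a * w) = F a * w + a * d w" for a w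
    using gen by (simp add: is_gen_derivation_def)
  have dmul: "d (a * w) = d a * w + a * d w" for a w
    using gen by (simp add: is_gen_derivation_def is_derivation_def)
  have v: "v \<in> center"
    using ppow_in_center[OF z] by (simp add: v_def)
  have E1: "F X * v + X * d v + X * v + v * X \<in> center"
    using identity[of x z] by (simp add: X_def v_def jordan_prod_def Fmul add.assoc)
  have E2: "F X * (v * v) + X * (d v * v + v * d v) + X * (v * v) + v * v * X \<in> center"
    using identity[of x "z * z"]
    by (simp add: X_def v_def jordan_prod_def ppow_mult_self_central[OF z] Fmul dmul add.assoc)
  have vX: "v * X = X * v" and vXw: "v * (X * w) = X * (v * w)" for w
    using centerD[OF v] by (metis mult.assoc)+
  have "F X * (v * v) + X * (d v * v + v * d v) + X * (v * v) + v * v * X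
      - (F X * v + X * d v + X * v + v * X) * v = X * (v * d v)"
    by (simp add: algebra_simps vX vXw)
  with center_diff[OF E2 center_mult[OF E1 v]] show ?thesis
    by (simp add: X_def v_def)
qed

lemma prime_ring_derivation_central_product_nonzero:
  fixes d :: "'a::real_algebra \<Rightarrow> 'a"
  assumes P: "prime_ring TYPE('a)" and der: "is_derivation d" and z: "z \<in> center" "d z \<noteq> 0"
  shows "ppow z l * d (ppow z l) \<noteq> 0"
proof
  assume product: "ppow z l * d (ppow z l) = 0"
  have "z \<noteq> 0"
    using z derivation_zero[OF der] by auto
  then have "ppow z l \<noteq> 0"
    by (rule prime_ring_central_ppow_nonzero[OF P z(1)])
  with product have "d (ppow z l) = 0"
    using prime_ring_central_mult_eq_0[OF P ppow_in_center[OF z(1)]] by blast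
  then have "((*) z ^^ l) (d z) = 0"
    by (simp add: derivation_ppow_central[OF der z(1)])
  then have "d z = 0"
    by (rule prime_ring_funpow_central_mult_eq_0[OF P z(1) \<open>z \<noteq> 0\<close>])
  with z show False
    by simp
qed

lemma prime_ring_central_ppow_imp_center_eq_UNIV:
  fixes c :: "'a::real_normed_algebra"
  assumes P: "prime_ring TYPE('a)" and c: "c \<in> center" "c \<noteq> 0"
    and powers: "\<And>x::'a. ppow x m \<in> center"
  shows "center = (UNIV :: 'a set)"
proof -
  have "y \<in> center" for y :: 'a
  proof -
    have expansion: "(\<Sum>k\<le>Suc m. t ^ k *\<^sub>R line_coeff c y m k) \<in> center" for t :: real
      using powers[of "c + t *\<^sub>R y"] by (simp only: ppow_line_expansion)
    have "line_coeff c y m 1 \<in> center"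
      by (rule polyfun_central_near_0_coeffs_central[OF zero_less_one expansion]) simp
    then have "inverse (real (Suc m)) *\<^sub>R (real (Suc m) *\<^sub>R ((*) c ^^ m) y) \<in> center"
      unfolding line_coeff_1_central[OF c(1)] by (rule center_scaleR)
    then have "((*) c ^^ m) y \<in> center"
      by simp
    then show ?thesis
      by (rule prime_ring_funpow_center_cancel[OF P c])
  qed
  then show ?thesis
    by blast
qed

lemma ppow_identity_on_open_product_imp_everywhere:
  fixes B :: "'a::{real_normed_algebra, banach} \<Rightarrow> 'a \<Rightarrow> 'a"
  assumes B: "bilinear B" and B_cont: "continuous_on UNIV (\<lambda>w. B (fst w) (snd w))"
    and "open H1" "H1 \<noteq> {}" "open H2" "H2 \<noteq> {}"
    and identity: "\<forall>x\<in>H1. \<forall>y\<in>H2. \<exists>m l. B (ppow x m) (ppow y l) \<in> center"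
  obtains m l where "\<And>x y. B (ppow x m) (ppow y l) \<in> center"
proof -
  define G where "G = (\<lambda>(m, l). {w. B (ppow (fst w) m) (ppow (snd w) l) \<in> center})"
  have "continuous_on UNIV (\<lambda>w. B (ppow (fst w) m) (ppow (snd w) l))" for m l
  proof -
    have "continuous_on UNIV (\<lambda>w::'a \<times> 'a. (ppow (fst w) m, ppow (snd w) l))"
      by (intro continuous_intros)
    from continuous_on_compose2[OF B_cont this] show ?thesis
      by simp
  qed
  then have "closed (G i)" for i
    unfolding G_def by (cases i) (auto intro!: closed_vimage[OF closed_center, unfolded vimage_def])
  moreover have "open (H1 \<times> H2)" "H1 \<times> H2 \<noteq> {}"
    using assms(3-6) by (auto intro: open_Times)
  moreover have "H1 \<times> H2 \<subseteq> (\<Union>i. G i)"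
    using identity by (fastforce simp: G_def)
  ultimately obtain i where "interior (G i) \<noteq> {}"
    by (rule Baire_closed_cover_interior)
  then obtain m l w where "w \<in> interior (G (m, l))"
    by (cases i) blast
  then obtain U V where "open U" "open V" "w \<in> U \<times> V" "U \<times> V \<subseteq> interior (G (m, l))"
    by (rule open_prod_elim[OF open_interior])
  then have "U \<noteq> {}" "V \<noteq> {}" "U \<times> V \<subseteq> G (m, l)"
    using interior_subset by blast+
  have "B (ppow x m) (ppow y l) \<in> center" for x y
  proof (rule bilinear_ppow_central_on_open[OF B \<open>open U\<close> \<open>U \<noteq> {}\<close> \<open>open V\<close> \<open>V \<noteq> {}\<close>])
    show "B (ppow x' m) (ppow y' l) \<in> center" if "x' \<in> U" "y' \<in> V" for x' y'
      using \<open>U \<times> V \<subseteq> G (m, l)\<close> that by (auto simp: G_def)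
  qed
  then show ?thesis
    by (rule that)
qed

lemma prime_ring_gen_derivation_identity_dichotomy:
  fixes F d :: "'a::real_normed_algebra \<Rightarrow> 'a"
  assumes P: "prime_ring TYPE('a)" and gen: "is_gen_derivation F d"
    and identity: "\<And>x y. F (ppow x m * ppow y l) + ppow x m \<circ>\<^sub>J ppow y l \<in> center"
  shows "(\<forall>x y::'a. x * y = y * x) \<or> d ` center = {0}"
proof (cases "\<exists>z\<in>center. d z \<noteq> 0")
  case False
  then have "d ` center = {0}"
    using center_zero by force
  then show ?thesis
    by simp
next
  case True
  then obtain z where z: "z \<in> center" "d z \<noteq> 0"
    by blast
  have der: "is_derivation d"
    using gen by (simp add: is_gen_derivation_def)
  define c where "c = ppow z l * d (ppow z l)"
  have c: "c \<in> center" "c \<noteq> 0"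
    using z prime_ring_derivation_central_product_nonzero[OF P der]
    by (auto simp: c_def intro!: center_mult ppow_in_center derivation_center[OF der])
  have "ppow x m * c \<in> center" for x :: 'a
    using gen_derivation_identity_central_product[OF gen identity z(1)] by (simp add: c_def)
  then have "c * ppow x m \<in> center" for x :: 'a
    by (simp add: centerD[OF c(1)])
  then have "ppow x m \<in> center" for x :: 'a
    by (rule prime_ring_center_cancel[OF P c])
  then have "center = (UNIV :: 'a set)"
    by (rule prime_ring_central_ppow_imp_center_eq_UNIV[OF P c])
  then have "x * y = y * x" for x y :: 'a
    by (metis UNIV_I centerD)
  then show ?thesis
    by blast
qed

theorem theorem3p1:
  fixes F d :: "'a::{real_normed_algebra, banach} \<Rightarrow> 'a"
    and H1 H2 :: "'a set"
  assumes "prime_ring TYPE('a)"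
    and "open H1" "H1 \<noteq> {}" "open H2" "H2 \<noteq> {}"
    and "is_gen_derivation F d"
    and "continuous_on UNIV F"
    and "\<not> inj d"
    and "\<forall>x\<in>H1. \<forall>y\<in>H2. \<exists>p q::nat. p > 0 \<and> q > 0 \<and>
           F (ppow x (p - 1) * ppow y (q - 1)) + (ppow x (p - 1)) \<circ>\<^sub>J (ppow y (q - 1)) \<in> center"
  shows "(\<forall>x y::'a. x * y = y * x) \<or> d ` center = {0}"
proof -
  have "linear F"
    using assms(6,7) additive_continuous_imp_linear by (auto simp: is_gen_derivation_def)
  define B where "B X Y = F (X * Y) + X \<circ>\<^sub>J Y" for X Y :: 'a
  have "bilinear B"
    using \<open>linear F\<close> unfolding bilinear_def B_def jordan_prod_def
    by (auto intro!: linearI simp: linear_iff algebra_simps)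
  moreover have "continuous_on UNIV (\<lambda>w. B (fst w) (snd w))"
    unfolding B_def jordan_prod_def
    by (intro continuous_on_compose2[OF assms(7)] continuous_intros) auto
  moreover have "\<forall>x\<in>H1. \<forall>y\<in>H2. \<exists>m l. B (ppow x m) (ppow y l) \<in> center"
    using assms(9) by (fastforce simp: B_def)
  ultimately obtain m l where "\<And>x y. B (ppow x m) (ppow y l) \<in> center"
    by (rule ppow_identity_on_open_product_imp_everywhere[OF _ _ assms(2-5)]) blast
  then show ?thesis
    by (intro prime_ring_gen_derivation_identity_dichotomy[OF assms(1,6)]) (simp add: B_def)
qed

end
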